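(* Let $k\ge1$, $-\frac{\pi}{2}\le\theta_1<\theta_2<\dots<\theta_{k+1}\le\frac{\pi}{2}$ and $\theta_{\min}=\min_{p\ne j}|\theta_p-\theta_j|$. Then $$\min_{\hat\theta_1,\dots,\hat\theta_k\in\mathbb R}\|\eta_{k+1,k}(\theta_1,\dots,\theta_{k+1},\hat\theta_1,\dots,\hat\theta_k)\|_\infty\ge\xi(k)\,\theta_{\min}^k.$$
   Context: For $z_1,\dots,z_p,\hat z_1,\dots,\hat z_q\in\mathbb C$, $\eta_{p,q}(z_1,\dots,z_p,\hat z_1,\dots,\hat z_q)\in\mathbb R^p$ is the vector whose $j$-th entry is $\prod_{l=1}^q|z_j-\hat z_l|$. For an integer $k\ge1$: $\xi(1)=\frac12$; $\xi(k)=\frac{(\frac{k-1}{2})!(\frac{k-3}{2})!}{4}$ if $k\ge3$ is odd; $\xi(k)=\frac{((\frac{k-2}{2})!)^2}{4}$ if $k$ is even. *)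

theory Defs
  imports Complex_Main
begin

text \<open>eta_{p,q}(z_1..z_p, zh_1..zh_q): vector in R^p (indexed 1..p) whose j-th entry
  is prod_{l=1..q} |z_j - zh_l|. Points are given as functions on indices 1..p / 1..q.\<close>
definition eta :: "nat \<Rightarrow> nat \<Rightarrow> (nat \<Rightarrow> complex) \<Rightarrow> (nat \<Rightarrow> complex) \<Rightarrow> nat \<Rightarrow> real" where
  "eta p q z zh j = (\<Prod>l=1..q. cmod (z j - zh l))"

definition linf_norm :: "nat \<Rightarrow> (nat \<Rightarrow> real) \<Rightarrow> real" where
  "linf_norm p v = Max ((\<lambda>j. \<bar>v j\<bar>) ` {1..p})"

definition xi :: "nat \<Rightarrow> real" where
  "xi k = (if k = 1 then 1/2
           else if odd k then fact ((k - 1) div 2) * fact ((k - 3) div 2) / 4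
           else (fact ((k - 2) div 2))^2 / 4)"

end

theory Submission
  imports Defs
begin

text \<open>The \<open>k\<close>-th divided difference of the monic polynomial \<open>\<Prod>l. (y - \<theta>h l)\<close> of degree \<open>k\<close>
  equals \<open>1\<close> at any \<open>k + 1\<close> distinct nodes. On the other hand, unfolding the recursion bounds a
  \<open>k\<close>-th divided difference by \<open>2^k max\<^sub>j |f(x\<^sub>j)| / (k! \<delta>^k)\<close> when consecutive nodes are at least
  \<open>\<delta>\<close> apart. So the largest of the values \<open>\<Prod>l. |\<theta> j - \<theta>h l|\<close> is at least \<open>k! \<delta>^k / 2^k\<close>,
  and \<open>\<xi>(k) \<le> k! / 2^k\<close>.\<close>

text \<open>\<open>divided_diff x f i r\<close> is the divided difference \<open>f[x\<^sub>i, \<dots>, x\<^sub>i\<^sub>+\<^sub>r]\<close>.\<close>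

fun divided_diff :: "(nat \<Rightarrow> real) \<Rightarrow> (real \<Rightarrow> real) \<Rightarrow> nat \<Rightarrow> nat \<Rightarrow> real" where
  "divided_diff x f i 0 = f (x i)"
| "divided_diff x f i (Suc r) =
     (divided_diff x f (Suc i) r - divided_diff x f i r) / (x (i + Suc r) - x i)"

lemma divided_diff_const: "divided_diff x (\<lambda>_. c) i r = (if r = 0 then c else 0)"
  by (induction r arbitrary: i) auto

lemma divided_diff_linear_factor:
  assumes "inj_on x {i..i + Suc r}"
  shows "divided_diff x (\<lambda>y. (y - a) * g y) i (Suc r)
           = (x i - a) * divided_diff x g i (Suc r) + divided_diff x g (Suc i) r"
  using assms
proof (induction r arbitrary: i)
  case 0
  then have "x (Suc i) - x i \<noteq> 0" by (auto dest: inj_onD)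
  then show ?case by (simp add: field_simps)
next
  case (Suc r)
  have D: "x (i + Suc (Suc r)) - x i \<noteq> 0" and D': "x (Suc i + Suc r) - x (Suc i) \<noteq> 0"
    using Suc.prems by (auto dest: inj_onD)
  have "inj_on x {i..i + Suc r}" "inj_on x {Suc i..Suc i + Suc r}"
    using Suc.prems by (auto elim: inj_on_subset)
  note IH = Suc.IH[OF this(1)] Suc.IH[OF this(2)]
  have step: "((x1 - a) * G1 + g2 - ((x0 - a) * G0 + g1)) / (xe - x0) = (x0 - a) * ((G1 - G0) / (xe - x0)) + G1"
    if "g2 - g1 = G1 * (xe - x1)" "xe - x0 \<noteq> 0" for x0 x1 xe G0 G1 g1 g2 :: real
  proof -
    have "(x1 - a) * G1 + g2 - ((x0 - a) * G0 + g1) = (x0 - a) * (G1 - G0) + G1 * (xe - x0)"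
      using that(1) by (simp add: algebra_simps)
    with that(2) show ?thesis by (simp add: add_divide_distrib)
  qed
  have "divided_diff x g (Suc (Suc i)) r - divided_diff x g (Suc i) r
          = divided_diff x g (Suc i) (Suc r) * (x (i + Suc (Suc r)) - x (Suc i))"
    using D' by simp
  from step[OF this D] show ?case
    by (simp only: divided_diff.simps(2)[of _ _ i "Suc r"] IH)
qed

lemma divided_diff_monic_prod:
  assumes "inj_on x {i..i + r}" and "m \<le> r"
  shows "divided_diff x (\<lambda>y. \<Prod>l=1..m. y - h l) i r = (if r = m then 1 else 0)"
  using assms
proof (induction m arbitrary: i r)
  case 0
  then show ?case by (simp add: divided_diff_const)
next
  case (Suc m)
  then obtain r' where r: "r = Suc r'" by (cases r) auto
  have "inj_on x {Suc i..Suc i + r'}" using Suc.prems r by (auto elim: inj_on_subset)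
  then have "divided_diff x (\<lambda>y. \<Prod>l=1..m. y - h l) (Suc i) r' = (if r' = m then 1 else 0)"
    using Suc r by simp
  moreover have "divided_diff x (\<lambda>y. \<Prod>l=1..m. y - h l) i r = 0"
    using Suc by simp
  moreover have "(\<lambda>y. \<Prod>l=1..Suc m. y - h l) = (\<lambda>y. (y - h (Suc m)) * (\<Prod>l=1..m. y - h l))"
    by (simp add: prod.cl_ivl_Suc mult.commute)
  moreover have "inj_on x {i..i + Suc r'}" using Suc.prems r by simp
  ultimately show ?case
    using r by (simp only: divided_diff_linear_factor) simp
qed

lemma spaced_nodes_le:
  fixes x :: "nat \<Rightarrow> real"
  assumes "\<forall>j\<in>{i..<i + r}. x j + d \<le> x (Suc j)"
  shows "x i + real r * d \<le> x (i + r)"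
  using assms
proof (induction r)
  case (Suc r)
  then have "x i + real r * d \<le> x (i + r)" "x (i + r) + d \<le> x (i + Suc r)" by auto
  then show ?case by (simp add: algebra_simps)
qed simp

lemma spaced_nodes_strict_mono_on:
  fixes x :: "nat \<Rightarrow> real"
  assumes "d > 0" and "\<forall>j\<in>{i..<i + r}. x j + d \<le> x (Suc j)"
  shows "strict_mono_on {i..i + r} x"
proof (rule strict_mono_onI)
  fix j j' :: nat assume "j \<in> {i..i + r}" "j' \<in> {i..i + r}" "j < j'"
  moreover from this have "x j + real (j' - j) * d \<le> x (j + (j' - j))"
    using assms(2) by (intro spaced_nodes_le) auto
  moreover have "0 < real (j' - j) * d" using \<open>j < j'\<close> \<open>d > 0\<close> by simp
  ultimately show "x j < x j'" by simp
qed

lemma divided_diff_abs_le: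
  assumes "d > 0"
    and "\<forall>j\<in>{i..<i + r}. x j + d \<le> x (Suc j)"
    and "\<forall>j\<in>{i..i + r}. \<bar>f (x j)\<bar> \<le> M"
  shows "\<bar>divided_diff x f i r\<bar> \<le> 2 ^ r * M / (fact r * d ^ r)"
  using assms(2,3)
proof (induction r arbitrary: i)
  case (Suc r)
  define C where "C = 2 ^ r * M / (fact r * d ^ r)"
  have "\<bar>divided_diff x f (Suc i) r\<bar> \<le> C" "\<bar>divided_diff x f i r\<bar> \<le> C"
    using Suc by (auto simp: C_def)
  moreover have "real (Suc r) * d \<le> x (i + Suc r) - x i"
    using spaced_nodes_le[OF Suc.prems(1)] by simp
  ultimately have "\<bar>divided_diff x f i (Suc r)\<bar> \<le> 2 * C / (real (Suc r) * d)"
    using \<open>d > 0\<close>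
    by (simp add: abs_divide frac_le)
  also have "\<dots> = 2 ^ Suc r * M / (fact (Suc r) * d ^ Suc r)"
    by (simp add: C_def field_simps)
  finally show ?case .
qed simp

lemma monic_prod_max_abs_ge:
  fixes x :: "nat \<Rightarrow> real"
  assumes "d > 0"
    and "\<forall>j\<in>{i..<i + k}. x j + d \<le> x (Suc j)"
    and "\<forall>j\<in>{i..i + k}. \<bar>\<Prod>l=1..k. x j - h l\<bar> \<le> M"
  shows "fact k * d ^ k / 2 ^ k \<le> M"
proof -
  have "inj_on x {i..i + k}"
    using spaced_nodes_strict_mono_on[OF assms(1,2)] by (rule strict_mono_on_imp_inj_on)
  then have "divided_diff x (\<lambda>y. \<Prod>l=1..k. y - h l) i k = 1"
    using divided_diff_monic_prod[of x i k k h] by simp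
  moreover have "\<bar>divided_diff x (\<lambda>y. \<Prod>l=1..k. y - h l) i k\<bar> \<le> 2 ^ k * M / (fact k * d ^ k)"
    using divided_diff_abs_le[OF assms(1,2)] assms(3) by simp
  ultimately have "1 \<le> 2 ^ k * M / (fact k * d ^ k)" by simp
  with \<open>d > 0\<close> show ?thesis by (simp add: field_simps)
qed

lemma fact_add_2: "(fact (n + 2) :: real) = (real n + 2) * fact (n + 1)"
  using fact_Suc[of "n + 1", where 'a=real] by (simp add: algebra_simps)

lemma xi_nonneg: "xi k \<ge> 0"
  by (simp add: xi_def)

lemma xi_even: "xi (2 * n + 2) = (fact n)\<^sup>2 / 4"
  by (simp add: xi_def)

lemma xi_odd: "xi (2 * n + 3) = fact (n + 1) * fact n / 4"
  by (simp add: xi_def)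

lemma xi_add_2_le:
  assumes "k \<ge> 1"
  shows "xi (k + 2) \<le> real ((k + 1) * (k + 2)) / 4 * xi k"
proof -
  have "k = 1 \<or> (\<exists>n. k = 2 * n + 2) \<or> (\<exists>n. k = 2 * n + 3)"
    using assms by presburger
  then consider "k = 1" | n where "k = 2 * n + 2" | n where "k = 2 * n + 3"
    by blast
  then show ?thesis
  proof cases
    case 1
    then show ?thesis by (simp add: xi_def)
  next
    case 2
    have "xi (k + 2) = (fact (n + 1))\<^sup>2 / 4"
      using xi_even[of "n + 1"] by (simp add: 2 algebra_simps)
    also have "\<dots> = (real n + 1)\<^sup>2 * xi k"
      by (simp only: 2 xi_even fact_Suc[of n, unfolded Suc_eq_plus1]) (simp add: power_mult_distrib mult_ac)
    also have "\<dots> \<le> real ((k + 1) * (k + 2)) / 4 * xi k"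
      by (rule mult_right_mono) (simp_all add: 2 xi_nonneg power2_eq_square field_simps)
    finally show ?thesis .
  next
    case 3
    have "xi (k + 2) = fact (n + 2) * fact (n + 1) / 4"
      using xi_odd[of "n + 1"] by (simp add: 3 algebra_simps)
    also have "\<dots> = (real n + 2) * (real n + 1) * xi k"
      by (simp only: 3 xi_odd fact_add_2 fact_Suc[of n, unfolded Suc_eq_plus1]) (simp add: mult_ac)
    also have "\<dots> \<le> real ((k + 1) * (k + 2)) / 4 * xi k"
      by (rule mult_right_mono) (simp_all add: 3 xi_nonneg field_simps)
    finally show ?thesis .
  qed
qed

lemma xi_le_fact_div_pow2:
  assumes "k \<ge> 1"
  shows "xi k \<le> fact k / 2 ^ k"
  using assms
proof (induction k rule: less_induct)
  case (less k)
  show ?case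
  proof (cases "k \<le> 2")
    case True
    with less.prems have "k = 1 \<or> k = 2" by auto
    then show ?thesis by (auto simp: xi_def)
  next
    case False
    define m where "m = k - 2"
    have k: "k = m + 2" and "m \<ge> 1" using False by (simp_all add: m_def)
    have "xi k \<le> real ((m + 1) * (m + 2)) / 4 * xi m"
      using xi_add_2_le[OF \<open>m \<ge> 1\<close>] by (simp add: k)
    also have "\<dots> \<le> real ((m + 1) * (m + 2)) / 4 * (fact m / 2 ^ m)"
      using less.IH[of m] k \<open>m \<ge> 1\<close> by (intro mult_left_mono) simp_all
    also have "\<dots> = fact k / 2 ^ k"
      by (simp add: k fact_add_2 field_simps)
    finally show ?thesis .
  qed
qed

lemma min_dist_pos_and_le_steps:
  fixes \<theta> :: "nat \<Rightarrow> real"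
  assumes "n \<ge> 1" and incr: "\<forall>j\<in>{1..n}. \<theta> j < \<theta> (j + 1)"
  defines "\<delta> \<equiv> Min {\<bar>\<theta> p - \<theta> j\<bar> | p j. p \<in> {1..n+1} \<and> j \<in> {1..n+1} \<and> p \<noteq> j}"
  shows "\<delta> > 0" and "\<forall>j\<in>{1..<1 + n}. \<theta> j + \<delta> \<le> \<theta> (Suc j)"
proof -
  define S where "S = {\<bar>\<theta> p - \<theta> j\<bar> | p j. p \<in> {1..n+1} \<and> j \<in> {1..n+1} \<and> p \<noteq> j}"
  have "S \<subseteq> (\<lambda>(p, j). \<bar>\<theta> p - \<theta> j\<bar>) ` ({1..n+1} \<times> {1..n+1})"
    unfolding S_def by auto
  then have "finite S" by (rule finite_subset) simp
  have step_in_S: "\<bar>\<theta> (Suc j) - \<theta> j\<bar> \<in> S" if "j \<in> {1..<1 + n}" for j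
    unfolding S_def using that by (intro CollectI exI[of _ "Suc j"] exI[of _ j]) simp
  have less: "\<theta> p < \<theta> j" if "p \<in> {1..n+1}" "j \<in> {1..n+1}" "p < j" for p j
  proof (rule lift_Suc_mono_less_ivl[of "{1..<n+1}"])
    show "\<theta> j' < \<theta> (Suc j')" if "j' \<in> {1..<n+1}" for j'
      using incr that by simp
  qed (use that in auto)
  have "\<forall>s\<in>S. s > 0"
  proof
    fix s assume "s \<in> S"
    then obtain p j where "s = \<bar>\<theta> p - \<theta> j\<bar>" "p \<in> {1..n+1}" "j \<in> {1..n+1}" "p \<noteq> j"
      unfolding S_def by blast
    then show "s > 0" using less[of p j] less[of j p] by (cases "p < j") auto
  qed
  moreover have "\<delta> \<in> S"
    unfolding \<delta>_def S_def[symmetric] using \<open>finite S\<close> step_in_S[of 1] \<open>n \<ge> 1\<close>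
    by (intro Min_in) auto
  ultimately show "\<delta> > 0" by blast
  show "\<forall>j\<in>{1..<1 + n}. \<theta> j + \<delta> \<le> \<theta> (Suc j)"
  proof
    fix j assume j: "j \<in> {1..<1 + n}"
    have "\<delta> \<le> \<bar>\<theta> (Suc j) - \<theta> j\<bar>"
      unfolding \<delta>_def S_def[symmetric] using \<open>finite S\<close> step_in_S[OF j] by (rule Min_le)
    moreover have "\<theta> j < \<theta> (Suc j)" using less j by simp
    ultimately show "\<theta> j + \<delta> \<le> \<theta> (Suc j)" by simp
  qed
qed

lemma eta_of_real:
  "eta p q (\<lambda>j. complex_of_real (\<theta> j)) (\<lambda>l. complex_of_real (\<theta>h l)) j = \<bar>\<Prod>l=1..q. \<theta> j - \<theta>h l\<bar>"
  by (simp add: eta_def abs_prod flip: of_real_diff)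

lemma abs_le_linf_norm: "j \<in> {1..p} \<Longrightarrow> \<bar>v j\<bar> \<le> linf_norm p v"
  unfolding linf_norm_def by (intro Max_ge) auto

theorem lemma3p6:
  fixes k :: nat and \<theta> :: "nat \<Rightarrow> real"
  assumes "k \<ge> 1"
    and "\<forall>j\<in>{1..k+1}. - (pi/2) \<le> \<theta> j \<and> \<theta> j \<le> pi/2"
    and "\<forall>j\<in>{1..k}. \<theta> j < \<theta> (j+1)"
  shows "\<forall>\<theta>h :: nat \<Rightarrow> real.
     linf_norm (k+1) (eta (k+1) k (\<lambda>j. complex_of_real (\<theta> j)) (\<lambda>l. complex_of_real (\<theta>h l)))
       \<ge> xi k * (Min {\<bar>\<theta> p - \<theta> j\<bar> | p j. p \<in> {1..k+1} \<and> j \<in> {1..k+1} \<and> p \<noteq> j}) ^ k"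
proof
  fix \<theta>h :: "nat \<Rightarrow> real"
  define \<delta> where "\<delta> = Min {\<bar>\<theta> p - \<theta> j\<bar> | p j. p \<in> {1..k+1} \<and> j \<in> {1..k+1} \<and> p \<noteq> j}"
  define M where "M = linf_norm (k+1) (eta (k+1) k (\<lambda>j. complex_of_real (\<theta> j)) (\<lambda>l. complex_of_real (\<theta>h l)))"
  have "\<delta> > 0" "\<forall>j\<in>{1..<1 + k}. \<theta> j + \<delta> \<le> \<theta> (Suc j)"
    using min_dist_pos_and_le_steps[OF assms(1,3)] unfolding \<delta>_def by auto
  moreover have "\<forall>j\<in>{1..1 + k}. \<bar>\<Prod>l=1..k. \<theta> j - \<theta>h l\<bar> \<le> M"
  proof
    fix j assume "j \<in> {1..1 + k}"
    then have "\<bar>eta (k+1) k (\<lambda>j. complex_of_real (\<theta> j)) (\<lambda>l. complex_of_real (\<theta>h l)) j\<bar> \<le> M"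
      unfolding M_def by (intro abs_le_linf_norm) simp
    then show "\<bar>\<Prod>l=1..k. \<theta> j - \<theta>h l\<bar> \<le> M" by (simp only: eta_of_real abs_abs)
  qed
  ultimately have "fact k * \<delta> ^ k / 2 ^ k \<le> M"
    by (rule monic_prod_max_abs_ge)
  moreover have "xi k * \<delta> ^ k \<le> fact k / 2 ^ k * \<delta> ^ k"
    using xi_le_fact_div_pow2[OF assms(1)] \<open>\<delta> > 0\<close> by (intro mult_right_mono) auto
  ultimately show "M \<ge> xi k * \<delta> ^ k" by simp
qed

end
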